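(* Let $q\geq2$ and $0<\alpha<1/q$. A randomized Anti-$q$-SG algorithm which on every input of length $n$ incurs an expected cost of at most $\alpha n$ must read at least $$b\geq K_{1/q}(\alpha)\,n=(1-h_q(1-\alpha))\,n\log_2 q$$ bits of advice.
   Context: Anti-$q$-SG (anti-string guessing) is the repeated matrix game with the $q\times q$ identity cost matrix: inputs $(n,x_1,\dots,x_n)$ with $x_i\in[q]$; in round $i$ the algorithm knows $n,x_1,\dots,x_{i-1}$ and outputs $y_i\in[q]$, paying $1$ if $y_i=x_i$ and $0$ otherwise; $n$ is the length. Advice is read from an infinite tape prepared by an oracle knowing the input; a randomized algorithm with advice is a probability distribution over deterministic algorithms with advice. $K_y(x)=x\log_2(x/y)+(1-x)\log_2((1-x)/(1-y))$; $h_q(x)=x\log_q(q-1)-x\log_qx-(1-x)\log_q(1-x)$. *)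

theory Defs
  imports "HOL-Probability.Probability"
begin

definition inputs :: "nat \<Rightarrow> nat \<Rightarrow> nat list set" where
  "inputs q n = {x. length x = n \<and> set x \<subseteq> {..<q}}"

text \<open>A deterministic online algorithm with advice: alg n xs t is the output y_i in round
  i = length xs + 1, given the length n, the previous requests xs = x_1..x_{i-1}, and the
  infinite advice tape t. An oracle maps the whole input to the advice tape.\<close>

definition cost :: "(nat \<Rightarrow> nat list \<Rightarrow> (nat \<Rightarrow> bool) \<Rightarrow> nat) \<Rightarrow> (nat list \<Rightarrow> (nat \<Rightarrow> bool))
    \<Rightarrow> nat list \<Rightarrow> nat" where
  "cost alg orc x = card {i. i < length x \<and> alg (length x) (take i x) (orc x) = x ! i}"

text \<open>The algorithm (with its oracle) reads at most b advice bits on inputs of length n: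
  on every such input, the run is unchanged if the tape is altered beyond its first b bits
  (the tape is read sequentially, so this is what reading at most b bits amounts to).\<close>
definition reads_at_most ::
  "(nat \<Rightarrow> nat list \<Rightarrow> (nat \<Rightarrow> bool) \<Rightarrow> nat) \<Rightarrow> (nat list \<Rightarrow> (nat \<Rightarrow> bool)) \<Rightarrow> nat \<Rightarrow> nat \<Rightarrow> nat \<Rightarrow> bool"
  where
  "reads_at_most alg orc q n b \<longleftrightarrow>
     (\<forall>x\<in>inputs q n. \<forall>t. (\<forall>j<b. t j = orc x j) \<longrightarrow>
        (\<forall>i<n. alg n (take i x) t = alg n (take i x) (orc x)))"

definition K :: "real \<Rightarrow> real \<Rightarrow> real" where
  "K y x = x * log 2 (x / y) + (1 - x) * log 2 ((1 - x) / (1 - y))"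

definition h :: "nat \<Rightarrow> real \<Rightarrow> real" where
  "h q x = x * log (real q) (real q - 1) - x * log (real q) x - (1 - x) * log (real q) (1 - x)"

end

theory Submission imports Defs begin

text \<open>Derandomize first: some deterministic algorithm \<open>r\<close> in the support has total cost
  \<open>C \<le> q\<^sup>n \<alpha> n\<close> over all \<open>q\<^sup>n\<close> inputs. For a fixed advice string the algorithm is an
  advice-free predictor, and for any such predictor \<open>\<Sum>\<^sub>x l\<^bsup>cost(x)\<^esup> = (q - 1 + l)\<^sup>n\<close>, since
  every round contributes a factor \<open>q - 1 + l\<close> whatever is predicted. Reading \<open>b\<close> bits means at
  most \<open>2\<^sup>b\<close> advice strings, so \<open>\<Sum>\<^sub>x l\<^bsup>cost(x)\<^esup> \<le> 2\<^sup>b (q - 1 + l)\<^sup>n\<close>, while Jensen's inequality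
  gives \<open>\<Sum>\<^sub>x l\<^bsup>cost(x)\<^esup> \<ge> q\<^sup>n l\<^bsup>\<alpha>n\<^esup>\<close> for \<open>0 < l < 1\<close>. Taking logarithms with the optimal
  \<open>l = \<alpha>(q - 1)/(1 - \<alpha>)\<close> yields \<open>b \<ge> K\<^sub>1\<^sub>/\<^sub>q(\<alpha>) n\<close>.\<close>

fun hits :: "(nat list \<Rightarrow> nat) \<Rightarrow> nat list \<Rightarrow> nat" where
  "hits f [] = 0"
| "hits f (a # x) = (if f [] = a then 1 else 0) + hits (\<lambda>xs. f (a # xs)) x"

lemma hits_eq_card: "hits f x = card {i. i < length x \<and> f (take i x) = x ! i}"
proof (induction x arbitrary: f)
  case Nil
  then show ?case by simp
next
  case (Cons a x)
  let ?H = "{i. i < length x \<and> f (a # take i x) = x ! i}"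
  have "{i. i < length (a # x) \<and> f (take i (a # x)) = (a # x) ! i}
      = (if f [] = a then {0} else {}) \<union> Suc ` ?H"
    by (auto simp: image_iff less_Suc_eq_0_disj split: if_splits)
  moreover have "card (Suc ` ?H) = card ?H"
    by (simp add: card_image)
  ultimately show ?case
    using Cons.IH[of "\<lambda>xs. f (a # xs)"] by (auto simp: card_insert_if)
qed

lemma cost_le_length: "cost alg orc x \<le> length x"
proof -
  have "{i. i < length x \<and> alg (length x) (take i x) (orc x) = x ! i} \<subseteq> {..<length x}"
    by auto
  then show ?thesis
    unfolding cost_def by (metis card_lessThan card_mono finite_lessThan)
qed

lemma inputs_Suc: "inputs q (Suc n) = (\<lambda>(a, x). a # x) ` ({..<q} \<times> inputs q n)"
  unfolding inputs_def by (auto simp: length_Suc_conv image_iff)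

lemma inputs_eq_lists: "inputs q n = {xs. set xs \<subseteq> {..<q} \<and> length xs = n}"
  unfolding inputs_def by auto

lemma finite_inputs: "finite (inputs q n)"
  unfolding inputs_eq_lists by (rule finite_lists_length_eq) simp

lemma card_inputs: "card (inputs q n) = q ^ n"
  unfolding inputs_eq_lists by (simp add: card_lists_length_eq)

lemma sum_if_eq_else_one:
  fixes l :: "'a::comm_ring_1"
  assumes "c < q"
  shows "(\<Sum>a<q. if c = a then l else 1) = of_nat q - 1 + l"
proof -
  have "(\<Sum>a<q. if c = a then l else 1) = (\<Sum>a<q. 1 + (if c = a then l - 1 else 0))"
    by (rule sum.cong) auto
  also have "\<dots> = of_nat q + (l - 1)"
    using assms by (simp add: sum.distrib)
  finally show ?thesis
    by simp
qed

lemma sum_power_hits: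
  fixes l :: "'a::comm_ring_1"
  assumes "\<And>xs. f xs < q"
  shows "(\<Sum>x\<in>inputs q n. l ^ hits f x) = (of_nat q - 1 + l) ^ n"
  using assms
proof (induction n arbitrary: f)
  case 0
  have "inputs q 0 = {[]}"
    unfolding inputs_def by auto
  then show ?case
    by simp
next
  case (Suc n)
  have inj: "inj_on (\<lambda>(a, x). a # x) ({..<q} \<times> inputs q n)"
    by (auto simp: inj_on_def)
  have "(\<Sum>x\<in>inputs q (Suc n). l ^ hits f x) = (\<Sum>a<q. \<Sum>x\<in>inputs q n. l ^ hits f (a # x))"
    unfolding inputs_Suc sum.reindex[OF inj] by (simp add: sum.cartesian_product case_prod_unfold)
  also have "\<dots> = (\<Sum>a<q. (if f [] = a then l else 1)
                      * (\<Sum>x\<in>inputs q n. l ^ hits (\<lambda>xs. f (a # xs)) x))"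
    by (rule sum.cong) (auto simp: sum_distrib_left power_add)
  also have "\<dots> = (\<Sum>a<q. if f [] = a then l else 1) * (of_nat q - 1 + l) ^ n"
    using Suc by (simp add: sum_distrib_right)
  also have "\<dots> = (of_nat q - 1 + l) ^ Suc n"
    using Suc.prems by (simp add: sum_if_eq_else_one)
  finally show ?case .
qed

definition truncate_tape :: "nat \<Rightarrow> (nat \<Rightarrow> bool) \<Rightarrow> nat \<Rightarrow> bool" where
  "truncate_tape b t = (\<lambda>j. j < b \<and> t j)"

lemma card_image_truncate_tape_le: "card (truncate_tape b ` T) \<le> 2 ^ b"
proof -
  have "truncate_tape b ` T \<subseteq> (\<lambda>s j. j \<in> s) ` Pow {..<b}"
  proof
    fix u assume "u \<in> truncate_tape b ` T"
    then obtain t where "u = truncate_tape b t"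
      by blast
    then have "u = (\<lambda>j. j \<in> {j. j < b \<and> t j})"
      by (simp add: truncate_tape_def)
    then show "u \<in> (\<lambda>s j. j \<in> s) ` Pow {..<b}"
      by blast
  qed
  then have "card (truncate_tape b ` T) \<le> card ((\<lambda>s j. j \<in> s) ` Pow {..<b})"
    by (intro card_mono) auto
  also have "\<dots> \<le> card (Pow {..<b})"
    by (rule card_image_le) simp
  finally show ?thesis
    by (simp add: card_Pow)
qed

lemma cost_eq_hits_truncate_tape:
  assumes "reads_at_most alg orc q n b" and "x \<in> inputs q n"
  shows "cost alg orc x = hits (\<lambda>xs. alg n xs (truncate_tape b (orc x))) x"
proof -
  have n: "length x = n"
    using assms(2) by (simp add: inputs_def)
  have "\<forall>j<b. truncate_tape b (orc x) j = orc x j"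
    by (simp add: truncate_tape_def)
  then have "\<forall>i<n. alg n (take i x) (truncate_tape b (orc x)) = alg n (take i x) (orc x)"
    using assms unfolding reads_at_most_def by blast
  then have "{i. i < length x \<and> alg (length x) (take i x) (orc x) = x ! i}
      = {i. i < length x \<and> alg n (take i x) (truncate_tape b (orc x)) = x ! i}"
    using n by auto
  then show ?thesis
    unfolding cost_def hits_eq_card by simp
qed

lemma sum_power_cost_le:
  fixes l :: real
  assumes out: "\<And>m xs t. alg m xs t < q" and reads: "reads_at_most alg orc q n b"
    and "0 \<le> l"
  shows "(\<Sum>x\<in>inputs q n. l ^ cost alg orc x) \<le> 2 ^ b * (real q - 1 + l) ^ n"
proof -
  define T where "T = truncate_tape b ` orc ` inputs q n"
  have "finite T"
    unfolding T_def using finite_inputs by simp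
  have "q \<ge> 1"
    using out[of 0 "[]" "\<lambda>_. False"] by simp
  have "(\<Sum>x\<in>inputs q n. l ^ cost alg orc x)
      \<le> (\<Sum>x\<in>inputs q n. \<Sum>t\<in>T. l ^ hits (\<lambda>xs. alg n xs t) x)"
  proof (rule sum_mono)
    fix x assume "x \<in> inputs q n"
    then show "l ^ cost alg orc x \<le> (\<Sum>t\<in>T. l ^ hits (\<lambda>xs. alg n xs t) x)"
      unfolding cost_eq_hits_truncate_tape[OF reads \<open>x \<in> inputs q n\<close>]
      using \<open>finite T\<close> \<open>0 \<le> l\<close> by (intro member_le_sum) (auto simp: T_def)
  qed
  also have "\<dots> = (\<Sum>t\<in>T. \<Sum>x\<in>inputs q n. l ^ hits (\<lambda>xs. alg n xs t) x)"
    by (rule sum.swap)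
  also have "\<dots> = real (card T) * (real q - 1 + l) ^ n"
    using out by (simp add: sum_power_hits)
  also have "\<dots> \<le> 2 ^ b * (real q - 1 + l) ^ n"
    using card_image_truncate_tape_le[of b "orc ` inputs q n"] \<open>q \<ge> 1\<close> \<open>0 \<le> l\<close>
    by (intro mult_right_mono) (simp_all add: T_def flip: of_nat_le_iff)
  finally show ?thesis .
qed

lemma exp_mean_le_mean_exp:
  fixes z :: "'a \<Rightarrow> real"
  assumes "finite X" and "X \<noteq> {}"
  shows "exp ((\<Sum>x\<in>X. z x) / card X) \<le> (\<Sum>x\<in>X. exp (z x)) / card X"
proof -
  have "card X > 0"
    using assms by (simp add: card_gt_0_iff)
  then have "exp (\<Sum>x\<in>X. (1 / card X) *\<^sub>R z x) \<le> (\<Sum>x\<in>X. 1 / card X * exp (z x))"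
    using assms by (intro convex_on_sum[OF _ _ exp_convex]) auto
  then show ?thesis
    by (simp add: sum_divide_distrib)
qed

lemma (in prob_space) exists_le_expectation:
  fixes f :: "'a \<Rightarrow> real"
  assumes "integrable M f"
  shows "\<exists>x\<in>space M. f x \<le> expectation f"
proof (rule ccontr)
  assume "\<not> ?thesis"
  then have "expectation (\<lambda>_. expectation f) < expectation f"
    using assms by (intro integral_less_AE_space) (auto simp: not_le emeasure_space_1)
  then show False
    by (simp add: prob_space)
qed

lemma K_uniform_mult_ln2:
  assumes "q > 1" and "0 < \<alpha>" and "\<alpha> < 1"
  shows "K (1 / real q) \<alpha> * ln 2
    = ln q + \<alpha> * ln \<alpha> + (1 - \<alpha>) * ln (1 - \<alpha>) - (1 - \<alpha>) * ln (real q - 1)"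
proof -
  have \<alpha>q: "ln (\<alpha> / (1 / real q)) = ln \<alpha> + ln q"
    using assms by (simp add: ln_mult)
  have "(1 - \<alpha>) / (1 - 1 / real q) = (1 - \<alpha>) * real q / (real q - 1)"
    using assms(1) by (simp add: field_simps)
  then have \<alpha>q': "ln ((1 - \<alpha>) / (1 - 1 / real q)) = ln (1 - \<alpha>) + ln q - ln (real q - 1)"
    using assms by (simp add: ln_mult ln_div)
  have "K (1 / real q) \<alpha> * ln 2
      = \<alpha> * ln (\<alpha> / (1 / real q)) + (1 - \<alpha>) * ln ((1 - \<alpha>) / (1 - 1 / real q))"
    unfolding K_def log_def by (simp add: field_simps)
  also have "\<dots> = \<alpha> * (ln \<alpha> + ln q) + (1 - \<alpha>) * (ln (1 - \<alpha>) + ln q - ln (real q - 1))"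
    unfolding \<alpha>q \<alpha>q' ..
  finally show ?thesis
    by (simp add: algebra_simps)
qed

lemma K_uniform_eq_entropy:
  assumes "q > 1" and "0 < \<alpha>" and "\<alpha> < 1"
  shows "K (1 / real q) \<alpha> = (1 - h q (1 - \<alpha>)) * log 2 (real q)"
proof -
  have "(1 - h q (1 - \<alpha>)) * log 2 (real q) * ln 2 = K (1 / real q) \<alpha> * ln 2"
    using assms unfolding K_uniform_mult_ln2[OF assms] h_def log_def
    by (simp add: field_simps)
  then show ?thesis
    by simp
qed

lemma card_mult_powr_mean_le_sum_power:
  fixes l \<mu> :: real and c :: "'a \<Rightarrow> nat"
  assumes "finite X" and "X \<noteq> {}" and "0 < l" and "l \<le> 1"
    and "(\<Sum>x\<in>X. real (c x)) \<le> card X * \<mu>"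
  shows "card X * l powr \<mu> \<le> (\<Sum>x\<in>X. l ^ c x)"
proof -
  have N: "real (card X) > 0"
    using assms(1,2) by (simp add: card_gt_0_iff)
  have "(\<Sum>x\<in>X. real (c x)) / card X \<le> \<mu>"
    using assms(5) N by (simp add: divide_le_eq mult.commute)
  then have "\<mu> * ln l \<le> (\<Sum>x\<in>X. real (c x) * ln l) / card X"
    using assms(3,4) by (simp add: mult_right_mono_neg flip: sum_distrib_right times_divide_eq_left)
  then have "l powr \<mu> \<le> exp ((\<Sum>x\<in>X. real (c x) * ln l) / card X)"
    using assms(3) by (simp add: powr_def)
  also have "\<dots> \<le> (\<Sum>x\<in>X. exp (real (c x) * ln l)) / card X"
    by (rule exp_mean_le_mean_exp[OF assms(1,2)])
  also have "\<dots> = (\<Sum>x\<in>X. l ^ c x) / card X"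
    using assms(3) by (simp add: exp_of_nat_mult)
  finally show ?thesis
    using N by (simp add: field_simps)
qed

lemma K_uniform_mult_ln2_optimal:
  assumes "q > 1" and "0 < \<alpha>" and "\<alpha> < 1"
  defines "l \<equiv> \<alpha> * (real q - 1) / (1 - \<alpha>)"
  shows "K (1 / real q) \<alpha> * ln 2 = ln q + \<alpha> * ln l - ln (real q - 1 + l)"
proof -
  have "real q - 1 + l = (real q - 1) / (1 - \<alpha>)"
    unfolding l_def using assms by (simp add: field_simps)
  then have lnql: "ln (real q - 1 + l) = ln (real q - 1) - ln (1 - \<alpha>)"
    using assms by (simp add: ln_div)
  have lnl: "ln l = ln \<alpha> + ln (real q - 1) - ln (1 - \<alpha>)"
    unfolding l_def using assms by (simp add: ln_mult ln_div)
  show ?thesis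
    unfolding K_uniform_mult_ln2[OF assms(1-3)] lnl lnql by (simp add: algebra_simps)
qed

lemma advice_bits_lower_bound_deterministic:
  assumes q: "q \<ge> 2" and \<alpha>: "0 < \<alpha>" "\<alpha> < 1 / real q"
    and out: "\<And>m xs t. alg m xs t < q" and reads: "reads_at_most alg orc q n b"
    and total: "(\<Sum>x\<in>inputs q n. real (cost alg orc x)) \<le> real q ^ n * (\<alpha> * real n)"
  shows "K (1 / real q) \<alpha> * real n \<le> real b"
proof -
  define l where "l = \<alpha> * (real q - 1) / (1 - \<alpha>)"
  have "\<alpha> * real q < 1"
    using \<alpha> q by (simp add: less_divide_eq mult.commute)
  moreover have "\<alpha> * 1 \<le> \<alpha> * real q"
    using \<alpha> q by (intro mult_left_mono) auto
  ultimately have \<alpha>1: "\<alpha> < 1" and "\<alpha> * (real q - 1) < 1 - \<alpha>"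
    by (auto simp: algebra_simps)
  then have l: "0 < l" "l < 1"
    unfolding l_def using \<alpha> q by auto
  have "inputs q n \<noteq> {}"
    using card_inputs[of q n] q by (metis card.empty power_not_zero zero_neq_numeral le_zero_eq)
  then have "real q ^ n * l powr (\<alpha> * real n) \<le> (\<Sum>x\<in>inputs q n. l ^ cost alg orc x)"
    using card_mult_powr_mean_le_sum_power[OF finite_inputs _ l(1) less_imp_le[OF l(2)]] total
    by (simp add: card_inputs)
  also have "\<dots> \<le> 2 ^ b * (real q - 1 + l) ^ n"
    using sum_power_cost_le[OF out reads] l by simp
  finally have "ln (real q ^ n * l powr (\<alpha> * real n)) \<le> ln (2 ^ b * (real q - 1 + l) ^ n)"
    using l q by (subst ln_le_cancel_iff) auto
  then have "real n * (ln q + \<alpha> * ln l - ln (real q - 1 + l)) \<le> real b * ln 2"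
    using l q by (simp add: ln_mult ln_realpow ln_powr algebra_simps)
  then have "K (1 / real q) \<alpha> * real n * ln 2 \<le> real b * ln 2"
    using K_uniform_mult_ln2_optimal[of q \<alpha>] \<alpha> \<alpha>1 q unfolding l_def by (simp add: ac_simps)
  then show ?thesis
    by simp
qed

theorem theorem10:
  fixes q n b :: nat and \<alpha> :: real and M :: "'r measure"
    and A :: "'r \<Rightarrow> nat \<Rightarrow> nat list \<Rightarrow> (nat \<Rightarrow> bool) \<Rightarrow> nat"
    and Orc :: "'r \<Rightarrow> nat list \<Rightarrow> (nat \<Rightarrow> bool)"
  assumes "q \<ge> 2" and "0 < \<alpha>" and "\<alpha> < 1 / real q"
    and "prob_space M"
    and "\<forall>r\<in>space M. \<forall>m xs t. A r m xs t < q"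
    and "\<forall>x\<in>inputs q n. (\<lambda>r. real (cost (A r) (Orc r) x)) \<in> borel_measurable M"
    and "\<forall>x\<in>inputs q n. (\<integral>r. real (cost (A r) (Orc r) x) \<partial>M) \<le> \<alpha> * real n"
    and "\<forall>r\<in>space M. reads_at_most (A r) (Orc r) q n b"
  shows "K (1 / real q) \<alpha> * real n \<le> real b
       \<and> K (1 / real q) \<alpha> * real n = (1 - h q (1 - \<alpha>)) * real n * log 2 (real q)"
proof
  interpret prob_space M
    by fact
  define total where "total r = (\<Sum>x\<in>inputs q n. real (cost (A r) (Orc r) x))" for r
  have integrable: "integrable M (\<lambda>r. real (cost (A r) (Orc r) x))" if "x \<in> inputs q n" for x
    using that assms(6) cost_le_length
    by (intro integrable_const_bound[where B = "real (length x)"]) auto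
  then have "expectation total = (\<Sum>x\<in>inputs q n. \<integral>r. real (cost (A r) (Orc r) x) \<partial>M)"
    unfolding total_def by (intro Bochner_Integration.integral_sum) auto
  also have "\<dots> \<le> real q ^ n * (\<alpha> * real n)"
    using sum_mono[of "inputs q n" _ "\<lambda>_. \<alpha> * real n"] assms(7) by (simp add: card_inputs)
  finally have "expectation total \<le> real q ^ n * (\<alpha> * real n)" .
  moreover obtain r where "r \<in> space M" and "total r \<le> expectation total"
    using exists_le_expectation[of total] integrable unfolding total_def by auto
  ultimately show "K (1 / real q) \<alpha> * real n \<le> real b"
    using advice_bits_lower_bound_deterministic[OF assms(1-3), of "A r" "Orc r" n b] assms(5,8)
    unfolding total_def by auto
next
  have "\<alpha> < 1"
    using assms(1,3) by (simp add: divide_le_eq order_less_le_trans[of \<alpha> "1 / real q" 1])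
  then show "K (1 / real q) \<alpha> * real n = (1 - h q (1 - \<alpha>)) * real n * log 2 (real q)"
    using K_uniform_eq_entropy[of q \<alpha>] assms(1,2) by simp
qed

end
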